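(* Let $G$ be a group, $N$ a normal subgroup of $G$, and $S=\bigoplus_{g\in G}S_g$ a virtually epsilon-strongly $G$-graded ring where, for each $g\in G$, $M_g$ is a set of commuting orthogonal idempotents such that $E_g=\bigvee M_g$ is a set of local units for $S_gS_{g^{-1}}$. For each $C\in G/N$ put $A_C=\bigvee_{g\in C}M_g$ and assume: (a) for all $g,h\in C$ and $e\in M_g$, $f\in M_h$ we have $ef=fe$; (b) the maximal elements of $(A_C,\le)$ are pairwise orthogonal idempotents; (c) every chain in the poset $(A_C,\le)$ is finite. Then the induced $G/N$-grading $\{S_C\}_{C\in G/N}$ is virtually epsilon-strong.
   Context: Rings are associative, not necessarily unital; $AB$ denotes finite sums of products. A $G$-grading: $S=\bigoplus_gS_g$, $S_gS_h\subseteq S_{gh}$. Induced grading: $S_C=\bigoplus_{g\in C}S_g$. Idempotents are ordered by $a\le b$ iff $a=ab=ba$; $\vee$ is the least upper bound (for commuting idempotents $a\vee b=a+b-ab$); for a family $\{M_i\}$, $\bigvee_iM_i$ is the set of finite joins of elements of $\bigcup_iM_i$. A set of local units for a ring $R$ is a $\vee$-closed set of pairwise commuting idempotents of $R$ such that every $r\in R$ has some $f$ in it with $fr=rf=r$. A grading $\{T_h\}_{h\in H}$ is virtually epsilon-strong if $T_hT_{h^{-1}}T_h=T_h$ for all $h$ and each ring $T_hT_{h^{-1}}$ has enough idempotents: a set of pairwise orthogonal commuting idempotents of that ring whose $\vee$-closure is a set of local units for it. *)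

theory Defs
  imports "HOL-Algebra.Coset"
begin

definition set_prod :: "'a::ring set \<Rightarrow> 'a set \<Rightarrow> 'a set" where
  "set_prod A B = {sum_list (map (\<lambda>(a, b). a * b) xs) | xs. set xs \<subseteq> A \<times> B}"

definition idem :: "'a::ring \<Rightarrow> bool" where
  "idem e \<longleftrightarrow> e * e = e"

definition idem_le :: "'a::ring \<Rightarrow> 'a \<Rightarrow> bool" where
  "idem_le a b \<longleftrightarrow> a = a * b \<and> a = b * a"

text \<open>Join of commuting idempotents (their least upper bound).\<close>
definition idem_join :: "'a::ring \<Rightarrow> 'a \<Rightarrow> 'a" where
  "idem_join a b = a + b - a * b"

inductive_set join_closure :: "'a::ring set \<Rightarrow> 'a set" for M where
  base: "m \<in> M \<Longrightarrow> m \<in> join_closure M"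
| join: "a \<in> join_closure M \<Longrightarrow> b \<in> join_closure M \<Longrightarrow> idem_join a b \<in> join_closure M"

definition local_units :: "'a::ring set \<Rightarrow> 'a set \<Rightarrow> bool" where
  "local_units E R \<longleftrightarrow> E \<subseteq> R \<and> (\<forall>e\<in>E. idem e) \<and> (\<forall>a\<in>E. \<forall>b\<in>E. a * b = b * a)
     \<and> (\<forall>a\<in>E. \<forall>b\<in>E. idem_join a b \<in> E)
     \<and> (\<forall>r\<in>R. \<exists>f\<in>E. f * r = r \<and> r * f = r)"

definition comm_orth_idems :: "'a::ring set \<Rightarrow> bool" where
  "comm_orth_idems M \<longleftrightarrow> (\<forall>e\<in>M. idem e) \<and> (\<forall>a\<in>M. \<forall>b\<in>M. a * b = b * a)
     \<and> (\<forall>a\<in>M. \<forall>b\<in>M. a \<noteq> b \<longrightarrow> a * b = 0)"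

definition enough_idempotents :: "'a::ring set \<Rightarrow> bool" where
  "enough_idempotents R \<longleftrightarrow>
     (\<exists>M. M \<subseteq> R \<and> comm_orth_idems M \<and> local_units (join_closure M) R)"

definition add_subgroup :: "'a::ring set \<Rightarrow> bool" where
  "add_subgroup A \<longleftrightarrow> 0 \<in> A \<and> (\<forall>x\<in>A. \<forall>y\<in>A. x - y \<in> A)"

definition is_grading :: "('g, 'b) monoid_scheme \<Rightarrow> ('g \<Rightarrow> 'a::ring set) \<Rightarrow> bool" where
  "is_grading H T \<longleftrightarrow>
     (\<forall>h\<in>carrier H. add_subgroup (T h))
   \<and> (\<forall>g\<in>carrier H. \<forall>h\<in>carrier H. set_prod (T g) (T h) \<subseteq> T (g \<otimes>\<^bsub>H\<^esub> h))
   \<and> (\<forall>s. \<exists>!f. finite {h. f h \<noteq> 0} \<and> {h. f h \<noteq> 0} \<subseteq> carrier H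
              \<and> (\<forall>h\<in>carrier H. f h \<in> T h) \<and> s = sum f {h. f h \<noteq> 0})"

definition virtually_eps_strong :: "('g, 'b) monoid_scheme \<Rightarrow> ('g \<Rightarrow> 'a::ring set) \<Rightarrow> bool" where
  "virtually_eps_strong H T \<longleftrightarrow>
     (\<forall>h\<in>carrier H. set_prod (set_prod (T h) (T (inv\<^bsub>H\<^esub> h))) (T h) = T h
        \<and> enough_idempotents (set_prod (T h) (T (inv\<^bsub>H\<^esub> h))))"

definition induced :: "('g \<Rightarrow> 'a::ring set) \<Rightarrow> 'g set \<Rightarrow> 'a set" where
  "induced T C = {sum f F | F f. finite F \<and> F \<subseteq> C \<and> (\<forall>g\<in>F. f g \<in> T g)}"

end

theory Submission
  imports Defs
begin

text \<open>
  Fix a coset \<open>C\<close> and put \<open>R = S\<^sub>C S\<^sub>C\<^sub>\<inverse>\<close>. Since \<open>C C\<inverse> C = C\<close> in \<open>G/N\<close> and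
  \<open>S\<^sub>g = S\<^sub>g S\<^sub>g\<^sub>\<inverse> S\<^sub>g\<close> for \<open>g \<in> C\<close>, we get \<open>R S\<^sub>C = S\<^sub>C\<close>; hence \<open>R R \<subseteq> R\<close>, and \<open>R\<close> is a subring
  containing every \<open>S\<^sub>g S\<^sub>g\<^sub>\<inverse>\<close>, \<open>g \<in> C\<close>.

  By (a) the joins \<open>A\<^sub>C\<close> of the idempotents in the \<open>M\<^sub>g\<close>, \<open>g \<in> C\<close>, commute, and they are local
  units for \<open>R\<close>: the factorisation \<open>S\<^sub>g = (S\<^sub>g S\<^sub>g\<^sub>\<inverse>) S\<^sub>g\<close> gives every element of \<open>S\<^sub>C\<close> a left
  unit in \<open>A\<^sub>C\<close>, symmetrically every element of \<open>S\<^sub>C\<^sub>\<inverse>\<close> has a right unit, and a left unit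
  \<open>u\<close> and a right unit \<open>v\<close> of \<open>r\<close> give the two-sided unit \<open>v \<or> u\<close>. As chains in \<open>A\<^sub>C\<close> are
  finite (c), Zorn's lemma puts every element of \<open>A\<^sub>C\<close> below a maximal one; so the maximal
  elements, orthogonal by (b), are enough idempotents for \<open>R\<close>.
\<close>

section \<open>Products of subsets and induced components\<close>

lemma set_prod_induct [consumes 1, case_names zero prod add]:
  assumes "x \<in> set_prod A B" and "P 0"
    and "\<And>a b. a \<in> A \<Longrightarrow> b \<in> B \<Longrightarrow> P (a * b)"
    and "\<And>x y. P x \<Longrightarrow> P y \<Longrightarrow> P (x + y)"
  shows "P x"
proof -
  obtain xs where "x = sum_list (map (\<lambda>(a, b). a * b) xs)" "set xs \<subseteq> A \<times> B"
    using assms(1) unfolding set_prod_def by auto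
  then show ?thesis
    by (induction xs arbitrary: x) (auto intro: assms(2-4))
qed

lemma zero_in_set_prod: "0 \<in> set_prod A B"
  unfolding set_prod_def by (auto intro: exI[of _ "[]"])

lemma mult_in_set_prod: "a \<in> A \<Longrightarrow> b \<in> B \<Longrightarrow> a * b \<in> set_prod A B"
  unfolding set_prod_def by (auto intro!: exI[of _ "[(a, b)]"])

lemma add_in_set_prod: "x \<in> set_prod A B \<Longrightarrow> y \<in> set_prod A B \<Longrightarrow> x + y \<in> set_prod A B"
proof -
  assume "x \<in> set_prod A B" "y \<in> set_prod A B"
  then obtain xs ys where "x = sum_list (map (\<lambda>(a, b). a * b) xs)" "set xs \<subseteq> A \<times> B"
    and "y = sum_list (map (\<lambda>(a, b). a * b) ys)" "set ys \<subseteq> A \<times> B"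
    unfolding set_prod_def by auto
  then show ?thesis
    unfolding set_prod_def by (intro CollectI exI[of _ "xs @ ys"]) auto
qed

lemma set_prod_least:
  assumes "0 \<in> X" and "\<And>x y. x \<in> X \<Longrightarrow> y \<in> X \<Longrightarrow> x + y \<in> X"
    and "\<And>a b. a \<in> A \<Longrightarrow> b \<in> B \<Longrightarrow> a * b \<in> X"
  shows "set_prod A B \<subseteq> X"
  using assms by (auto elim: set_prod_induct)

lemma set_prod_mono: "A \<subseteq> A' \<Longrightarrow> B \<subseteq> B' \<Longrightarrow> set_prod A B \<subseteq> set_prod A' B'"
  by (rule set_prod_least) (auto intro: zero_in_set_prod add_in_set_prod mult_in_set_prod)

lemma uminus_in_set_prod:
  assumes "\<And>a. a \<in> A \<Longrightarrow> - a \<in> A" and "x \<in> set_prod A B"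
  shows "- x \<in> set_prod A B"
  using assms(2)
proof (induction rule: set_prod_induct)
  case (prod a b)
  then show ?case using mult_in_set_prod[OF assms(1)] by fastforce
qed (auto simp: zero_in_set_prod dest: add_in_set_prod)

lemma set_prod_assoc: "set_prod (set_prod A B) C = set_prod A (set_prod B C)"
proof
  show "set_prod (set_prod A B) C \<subseteq> set_prod A (set_prod B C)"
  proof (rule set_prod_least)
    fix p c assume "p \<in> set_prod A B" "c \<in> C"
    then show "p * c \<in> set_prod A (set_prod B C)"
      by (induction rule: set_prod_induct)
        (auto simp: distrib_right mult.assoc zero_in_set_prod
          intro: add_in_set_prod mult_in_set_prod)
  qed (auto intro: zero_in_set_prod add_in_set_prod)
  show "set_prod A (set_prod B C) \<subseteq> set_prod (set_prod A B) C"
  proof (rule set_prod_least)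
    fix a p assume "a \<in> A" "p \<in> set_prod B C"
    from this(2) show "a * p \<in> set_prod (set_prod A B) C"
      by (induction rule: set_prod_induct)
        (auto simp: distrib_left mult.assoc[symmetric] zero_in_set_prod
          intro: add_in_set_prod mult_in_set_prod \<open>a \<in> A\<close>)
  qed (auto intro: zero_in_set_prod add_in_set_prod)
qed

lemma idem_join_in_set_prod:
  assumes "set_prod (set_prod A B) A = A" and "\<And>a. a \<in> A \<Longrightarrow> - a \<in> A"
    and "x \<in> set_prod A B" and "y \<in> set_prod A B"
  shows "idem_join x y \<in> set_prod A B"
proof -
  have "set_prod (set_prod A B) (set_prod A B) = set_prod A B"
    using assms(1) by (metis set_prod_assoc)
  then have "- (x * y) \<in> set_prod A B"
    using uminus_in_set_prod[OF assms(2)] mult_in_set_prod[OF assms(3,4)] by simp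
  then show ?thesis
    unfolding idem_join_def diff_conv_add_uminus using assms(3,4) by (intro add_in_set_prod)
qed

lemma add_subgroup_zero: "add_subgroup A \<Longrightarrow> 0 \<in> A"
  unfolding add_subgroup_def by blast

lemma add_subgroup_add: "add_subgroup A \<Longrightarrow> x \<in> A \<Longrightarrow> y \<in> A \<Longrightarrow> x + y \<in> A"
  unfolding add_subgroup_def by (metis diff_0 diff_minus_eq_add)

lemma add_subgroup_uminus: "add_subgroup A \<Longrightarrow> x \<in> A \<Longrightarrow> - x \<in> A"
  unfolding add_subgroup_def by (metis diff_0)

lemma is_gradingD:
  assumes "is_grading G S"
  shows is_grading_add_subgroup: "g \<in> carrier G \<Longrightarrow> add_subgroup (S g)"
    and is_grading_set_prod: "g \<in> carrier G \<Longrightarrow> h \<in> carrier G \<Longrightarrow> set_prod (S g) (S h) \<subseteq> S (g \<otimes>\<^bsub>G\<^esub> h)"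
  using assms unfolding is_grading_def by blast+

lemma induced_induct [consumes 1, case_names zero elem add]:
  assumes "x \<in> induced S C" and "P 0"
    and "\<And>g s. g \<in> C \<Longrightarrow> s \<in> S g \<Longrightarrow> P s"
    and "\<And>x y. P x \<Longrightarrow> P y \<Longrightarrow> P (x + y)"
  shows "P x"
proof -
  obtain F f where "x = sum f F" "finite F" "F \<subseteq> C" "\<forall>g\<in>F. f g \<in> S g"
    using assms(1) unfolding induced_def by auto
  moreover from this(2-4) have "P (sum f F)"
    by (induction F rule: finite_induct) (auto intro: assms(2-4))
  ultimately show ?thesis
    by simp
qed

lemma induced_least:
  assumes "0 \<in> X" and "\<And>x y. x \<in> X \<Longrightarrow> y \<in> X \<Longrightarrow> x + y \<in> X"
    and "\<And>g. g \<in> C \<Longrightarrow> S g \<subseteq> X"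
  shows "induced S C \<subseteq> X"
proof
  fix x assume "x \<in> induced S C"
  then show "x \<in> X"
    by (induction rule: induced_induct) (use assms in auto)
qed

lemma zero_in_induced: "0 \<in> induced S C"
  unfolding induced_def by (auto intro: exI[of _ "{}"])

lemma component_subset_induced: "g \<in> C \<Longrightarrow> S g \<subseteq> induced S C"
  unfolding induced_def by (auto intro!: exI[of _ "{g}"])

lemma add_in_induced:
  assumes "\<And>g. g \<in> C \<Longrightarrow> add_subgroup (S g)"
    and "x \<in> induced S C" and "y \<in> induced S C"
  shows "x + y \<in> induced S C"
proof -
  obtain F f where F: "x = sum f F" "finite F" "F \<subseteq> C" "\<forall>g\<in>F. f g \<in> S g"
    using assms(2) unfolding induced_def by auto
  obtain F' f' where F': "y = sum f' F'" "finite F'" "F' \<subseteq> C" "\<forall>g\<in>F'. f' g \<in> S g"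
    using assms(3) unfolding induced_def by auto
  define h where "h g = (if g \<in> F then f g else 0) + (if g \<in> F' then f' g else 0)" for g
  have "x + y = sum h (F \<union> F')"
    using F F' by (simp add: h_def sum.distrib sum.If_cases Int_absorb2)
  moreover have "\<forall>g\<in>F \<union> F'. h g \<in> S g"
    using F F' assms(1) unfolding h_def by (auto intro!: add_subgroup_add add_subgroup_zero)
  ultimately show ?thesis
    unfolding induced_def using F F' by blast
qed

lemma uminus_in_induced:
  assumes "\<And>g. g \<in> C \<Longrightarrow> add_subgroup (S g)" and "x \<in> induced S C"
  shows "- x \<in> induced S C"
proof -
  obtain F f where "x = sum f F" "finite F" "F \<subseteq> C" "\<forall>g\<in>F. f g \<in> S g"
    using assms(2) unfolding induced_def by auto
  then show ?thesis
    unfolding induced_def using assms(1)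
    by (intro CollectI exI[of _ F] exI[of _ "\<lambda>g. - f g"]) (auto simp: sum_negf add_subgroup_uminus)
qed

lemma set_prod_induced:
  assumes "group G" and grading: "is_grading G S"
    and C: "C \<subseteq> carrier G" and D: "D \<subseteq> carrier G"
  shows "set_prod (induced S C) (induced S D) \<subseteq> induced S (C <#>\<^bsub>G\<^esub> D)"
proof -
  have "C <#>\<^bsub>G\<^esub> D \<subseteq> carrier G"
    using group.setmult_subset_G[OF \<open>group G\<close> C D] .
  then have add: "x + y \<in> induced S (C <#>\<^bsub>G\<^esub> D)"
    if "x \<in> induced S (C <#>\<^bsub>G\<^esub> D)" "y \<in> induced S (C <#>\<^bsub>G\<^esub> D)" for x y
    using that by (intro add_in_induced) (auto intro: is_grading_add_subgroup[OF grading])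
  have homogeneous: "s * t \<in> induced S (C <#>\<^bsub>G\<^esub> D)"
    if "g \<in> C" "s \<in> S g" "h \<in> D" "t \<in> S h" for g s h t
  proof -
    have "s * t \<in> S (g \<otimes>\<^bsub>G\<^esub> h)"
      using is_grading_set_prod[OF grading] mult_in_set_prod[OF that(2,4)] that(1,3) C D
      by (meson subsetD)
    moreover have "g \<otimes>\<^bsub>G\<^esub> h \<in> C <#>\<^bsub>G\<^esub> D"
      using that unfolding set_mult_def by blast
    ultimately show ?thesis
      using component_subset_induced by (metis subsetD)
  qed
  show ?thesis
  proof (rule set_prod_least)
    fix x y assume "x \<in> induced S C" "y \<in> induced S D"
    then show "x * y \<in> induced S (C <#>\<^bsub>G\<^esub> D)"
    proof (induction rule: induced_induct)
      case (elem g s)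
      from \<open>y \<in> induced S D\<close> show ?case
        by (induction rule: induced_induct)
          (auto simp: distrib_left zero_in_induced intro: add homogeneous[OF elem(1,2)])
    qed (auto simp: distrib_right zero_in_induced intro: add)
  qed (auto simp: zero_in_induced add)
qed

section \<open>Joins of commuting idempotents\<close>

lemma join_closure_mono: "X \<subseteq> Y \<Longrightarrow> join_closure X \<subseteq> join_closure Y"
proof
  fix x assume "X \<subseteq> Y" "x \<in> join_closure X"
  from this(2) show "x \<in> join_closure Y"
    by induction (use \<open>X \<subseteq> Y\<close> in \<open>auto intro: join_closure.intros\<close>)
qed

lemma join_closure_least:
  assumes "X \<subseteq> R" and "\<And>a b. a \<in> R \<Longrightarrow> b \<in> R \<Longrightarrow> idem_join a b \<in> R"
  shows "join_closure X \<subseteq> R"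
proof
  fix x assume "x \<in> join_closure X"
  then show "x \<in> R"
    by induction (use assms in auto)
qed

lemma commute_with_join_closure:
  assumes "\<forall>m\<in>X. y * m = m * y" and "x \<in> join_closure X"
  shows "y * x = x * y"
  using assms(2)
proof induction
  case (join a b)
  then have "y * (a * b) = (a * b) * y"
    by (metis mult.assoc)
  with join show ?case
    unfolding idem_join_def by (simp add: algebra_simps)
qed (use assms(1) in auto)

lemma join_closure_commute:
  assumes "\<forall>a\<in>X. \<forall>b\<in>X. a * b = b * a" and "a \<in> join_closure X" and "b \<in> join_closure X"
  shows "a * b = b * a"
  using assms commute_with_join_closure by metis

lemma idem_idem_join:
  assumes "idem a" and "idem b" and "a * b = b * a"
  shows "idem (idem_join a b)"
proof -
  have "a * a = a" "b * b = b"
    using assms(1,2) unfolding idem_def by auto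
  then have "a * (a * b) = a * b" "b * (a * b) = a * b" "a * (b * (a * b)) = a * b"
    using assms(3) by (metis mult.assoc)+
  then show ?thesis
    using \<open>a * a = a\<close> \<open>b * b = b\<close> assms(3)
    unfolding idem_def idem_join_def by (simp add: algebra_simps)
qed

lemma join_closure_idem:
  assumes "\<forall>a\<in>X. \<forall>b\<in>X. a * b = b * a" and "\<forall>a\<in>X. idem a" and "x \<in> join_closure X"
  shows "idem x"
  using assms(3)
proof induction
  case (join a b)
  then show ?case
    using idem_idem_join join_closure_commute[OF assms(1)] by blast
qed (use assms(2) in auto)

section \<open>One-sided local units\<close>

definition left_unital :: "'a::ring set \<Rightarrow> 'a set" where
  "left_unital E = {x. \<exists>u\<in>E. u * x = x}"

definition right_unital :: "'a::ring set \<Rightarrow> 'a set" where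
  "right_unital E = {x. \<exists>u\<in>E. x * u = x}"

lemma zero_in_left_unital: "E \<noteq> {} \<Longrightarrow> 0 \<in> left_unital E"
  unfolding left_unital_def by auto

lemma zero_in_right_unital: "E \<noteq> {} \<Longrightarrow> 0 \<in> right_unital E"
  unfolding right_unital_def by auto

lemma idem_join_mult_left: "b * x = x \<Longrightarrow> idem_join a b * x = x"
  unfolding idem_join_def by (simp add: algebra_simps)

lemma mult_idem_join_right: "x * a = x \<Longrightarrow> x * idem_join a b = x"
  unfolding idem_join_def by (simp add: algebra_simps flip: mult.assoc)

lemma idem_join_commute: "a * b = b * a \<Longrightarrow> idem_join a b = idem_join b a"
  unfolding idem_join_def by (simp add: algebra_simps)

lemma left_right_unital_two_sided:
  assumes "x \<in> left_unital E" and "x \<in> right_unital E"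
    and "\<And>a b. a \<in> E \<Longrightarrow> b \<in> E \<Longrightarrow> idem_join a b \<in> E"
  shows "\<exists>u\<in>E. u * x = x \<and> x * u = x"
proof -
  obtain u v where uv: "u \<in> E" "v \<in> E" "u * x = x" "x * v = x"
    using assms(1,2) unfolding left_unital_def right_unital_def by blast
  have "idem_join v u * x = x" "x * idem_join v u = x"
    using idem_join_mult_left[OF uv(3)] mult_idem_join_right[OF uv(4)] .
  then show ?thesis
    using assms(3)[OF uv(2,1)] by blast
qed

lemma add_in_left_unital:
  assumes "\<forall>a\<in>X. \<forall>b\<in>X. a * b = b * a"
    and "x \<in> left_unital (join_closure X)" and "y \<in> left_unital (join_closure X)"
  shows "x + y \<in> left_unital (join_closure X)"
proof -
  obtain u v where uv: "u \<in> join_closure X" "v \<in> join_closure X" "u * x = x" "v * y = y"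
    using assms(2,3) unfolding left_unital_def by blast
  have "idem_join u v = idem_join v u"
    using idem_join_commute join_closure_commute[OF assms(1) uv(1,2)] .
  then have "idem_join u v * x = x"
    using idem_join_mult_left[OF uv(3)] by simp
  moreover have "idem_join u v * y = y"
    using idem_join_mult_left[OF uv(4)] .
  ultimately show ?thesis
    unfolding left_unital_def using join_closure.join[OF uv(1,2)]
    by (intro CollectI bexI[of _ "idem_join u v"]) (simp_all add: distrib_left)
qed

lemma add_in_right_unital:
  assumes "\<forall>a\<in>X. \<forall>b\<in>X. a * b = b * a"
    and "x \<in> right_unital (join_closure X)" and "y \<in> right_unital (join_closure X)"
  shows "x + y \<in> right_unital (join_closure X)"
proof -
  obtain u v where uv: "u \<in> join_closure X" "v \<in> join_closure X" "x * u = x" "y * v = y"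
    using assms(2,3) unfolding right_unital_def by blast
  have "idem_join u v = idem_join v u"
    using idem_join_commute join_closure_commute[OF assms(1) uv(1,2)] .
  then have "y * idem_join u v = y"
    using mult_idem_join_right[OF uv(4)] by simp
  moreover have "x * idem_join u v = x"
    using mult_idem_join_right[OF uv(3)] .
  ultimately show ?thesis
    unfolding right_unital_def using join_closure.join[OF uv(1,2)]
    by (intro CollectI bexI[of _ "idem_join u v"]) (simp_all add: distrib_right)
qed

lemma local_units_unital:
  assumes "local_units E R" and "E \<subseteq> E'"
  shows "R \<subseteq> left_unital E' \<inter> right_unital E'"
  using assms unfolding local_units_def left_unital_def right_unital_def by blast

lemma set_prod_subset_left_unital:
  assumes "\<forall>a\<in>X. \<forall>b\<in>X. a * b = b * a" and "join_closure X \<noteq> {}"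
    and "A \<subseteq> left_unital (join_closure X)"
  shows "set_prod A B \<subseteq> left_unital (join_closure X)"
proof (rule set_prod_least[OF zero_in_left_unital[OF assms(2)]])
  show "a * b \<in> left_unital (join_closure X)" if "a \<in> A" for a b
    using assms(3) that unfolding left_unital_def by (force simp: mult.assoc[symmetric])
qed (rule add_in_left_unital[OF assms(1)])

lemma set_prod_subset_right_unital:
  assumes "\<forall>a\<in>X. \<forall>b\<in>X. a * b = b * a" and "join_closure X \<noteq> {}"
    and "B \<subseteq> right_unital (join_closure X)"
  shows "set_prod A B \<subseteq> right_unital (join_closure X)"
proof (rule set_prod_least[OF zero_in_right_unital[OF assms(2)]])
  show "a * b \<in> right_unital (join_closure X)" if "b \<in> B" for a b
    using assms(3) that unfolding right_unital_def by (force simp: mult.assoc)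
qed (rule add_in_right_unital[OF assms(1)])

lemma local_units_join_closure:
  assumes comm: "\<forall>a\<in>X. \<forall>b\<in>X. a * b = b * a" and idem: "\<forall>a\<in>X. idem a"
    and "X \<subseteq> R" and join: "\<And>a b. a \<in> R \<Longrightarrow> b \<in> R \<Longrightarrow> idem_join a b \<in> R"
    and unital: "R \<subseteq> left_unital (join_closure X) \<inter> right_unital (join_closure X)"
  shows "local_units (join_closure X) R"
  unfolding local_units_def
proof (intro conjI ballI)
  show "join_closure X \<subseteq> R"
    using join_closure_least[OF \<open>X \<subseteq> R\<close> join] .
  show "idem e" if "e \<in> join_closure X" for e
    using join_closure_idem[OF comm idem that] .
  show "a * b = b * a" if "a \<in> join_closure X" "b \<in> join_closure X" for a b
    using join_closure_commute[OF comm that] .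
  show "idem_join a b \<in> join_closure X" if "a \<in> join_closure X" "b \<in> join_closure X" for a b
    using join_closure.join[OF that] .
  show "\<exists>f\<in>join_closure X. f * r = r \<and> r * f = r" if "r \<in> R" for r
    using left_right_unital_two_sided join_closure.join unital that by blast
qed

section \<open>Maximal idempotents\<close>

lemma idem_le_trans: "idem_le a b \<Longrightarrow> idem_le b c \<Longrightarrow> idem_le a c"
  unfolding idem_le_def by (metis mult.assoc)

lemma idem_le_refl: "idem a \<Longrightarrow> idem_le a a"
  unfolding idem_le_def idem_def by simp

lemma idem_le_antisym: "idem_le a b \<Longrightarrow> idem_le b a \<Longrightarrow> a = b"
  unfolding idem_le_def by metis

lemma finite_chain_has_greatest:
  assumes "finite Ch" and "Ch \<noteq> {}" and "\<forall>x\<in>Ch. \<forall>y\<in>Ch. P x y \<or> P y x" and "transp P"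
  shows "\<exists>m\<in>Ch. \<forall>x\<in>Ch. P x m"
  using assms
proof (induction Ch rule: finite_ne_induct)
  case (insert x F)
  then obtain m where "m \<in> F" "\<forall>y\<in>F. P y m"
    by blast
  with insert.prems show ?case
    by (metis insert_iff transpD)
qed auto

definition maximal_idems :: "'a::ring set \<Rightarrow> 'a set" where
  "maximal_idems A = {x \<in> A. \<forall>z\<in>A. idem_le x z \<longrightarrow> z = x}"

lemma exists_maximal_idem_above:
  assumes idem: "\<forall>a\<in>A. idem a"
    and chains: "\<And>Ch. Ch \<subseteq> A \<Longrightarrow> \<forall>x\<in>Ch. \<forall>y\<in>Ch. idem_le x y \<or> idem_le y x \<Longrightarrow> finite Ch"
    and "u \<in> A"
  shows "\<exists>m\<in>maximal_idems A. idem_le u m"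
proof -
  define U where "U = {a \<in> A. idem_le u a}"
  have "partial_order_on U (relation_of idem_le U)"
    using idem by (intro partial_order_on_relation_ofI)
      (auto simp: U_def intro: idem_le_refl idem_le_trans idem_le_antisym)
  moreover have "\<exists>m\<in>U. \<forall>a\<in>Ch. idem_le a m" if "Ch \<in> Chains (relation_of idem_le U)" for Ch
  proof (cases "Ch = {}")
    case True
    then show ?thesis
      using \<open>u \<in> A\<close> idem idem_le_refl unfolding U_def by blast
  next
    case False
    have "Ch \<subseteq> U" and total: "\<forall>x\<in>Ch. \<forall>y\<in>Ch. idem_le x y \<or> idem_le y x"
      using that unfolding Chains_def relation_of_def by auto
    then have "finite Ch"
      using chains unfolding U_def by blast
    then show ?thesis
      using finite_chain_has_greatest[OF _ False total] \<open>Ch \<subseteq> U\<close> idem_le_trans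
      by (metis subsetD transpI)
  qed
  ultimately obtain m where "m \<in> U" and "\<forall>a\<in>U. idem_le m a \<longrightarrow> a = m"
    using predicate_Zorn by blast
  then show ?thesis
    unfolding maximal_idems_def U_def using idem_le_trans by blast
qed

lemma enough_idempotents_if_maximal_orthogonal:
  assumes units: "local_units A R"
    and chains: "\<And>Ch. Ch \<subseteq> A \<Longrightarrow> \<forall>x\<in>Ch. \<forall>y\<in>Ch. idem_le x y \<or> idem_le y x \<Longrightarrow> finite Ch"
    and orth: "\<And>x y. x \<in> maximal_idems A \<Longrightarrow> y \<in> maximal_idems A \<Longrightarrow> x \<noteq> y \<Longrightarrow> x * y = 0"
  shows "enough_idempotents R"
proof -
  have "A \<subseteq> R" and idem: "\<forall>a\<in>A. idem a" and comm: "\<forall>a\<in>A. \<forall>b\<in>A. a * b = b * a"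
    and join: "\<forall>a\<in>A. \<forall>b\<in>A. idem_join a b \<in> A" and unit: "\<forall>r\<in>R. \<exists>u\<in>A. u * r = r \<and> r * u = r"
    using units unfolding local_units_def by blast+
  define M where "M = maximal_idems A"
  have "M \<subseteq> A"
    unfolding M_def maximal_idems_def by blast
  have "join_closure M \<subseteq> A"
    using \<open>M \<subseteq> A\<close> join by (intro join_closure_least) auto
  have "\<exists>m\<in>join_closure M. m * r = r \<and> r * m = r" if "r \<in> R" for r
  proof -
    obtain u where "u \<in> A" "u * r = r" "r * u = r"
      using unit \<open>r \<in> R\<close> by blast
    moreover obtain m where "m \<in> M" "idem_le u m"
      using exists_maximal_idem_above[OF idem chains \<open>u \<in> A\<close>] unfolding M_def by blast
    ultimately have "m * r = r" "r * m = r"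
      unfolding idem_le_def by (metis mult.assoc)+
    then show ?thesis
      using \<open>m \<in> M\<close> join_closure.base by blast
  qed
  then have "local_units (join_closure M) R"
    unfolding local_units_def using \<open>join_closure M \<subseteq> A\<close> \<open>A \<subseteq> R\<close> idem comm
    by (simp add: join_closure.join subset_iff)
  moreover have "comm_orth_idems M"
    unfolding comm_orth_idems_def using \<open>M \<subseteq> A\<close> idem comm orth unfolding M_def by blast
  ultimately show ?thesis
    unfolding enough_idempotents_def using \<open>M \<subseteq> A\<close> \<open>A \<subseteq> R\<close> by blast
qed

section \<open>Components of the induced grading\<close>

lemma (in normal) FactGroup_carrier_subset: "X \<in> carrier (G Mod H) \<Longrightarrow> X \<subseteq> carrier G"
  using rcosets_carrier[OF is_group] by (simp add: FactGroup_def)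

lemma (in normal) FactGroup_carrier_nonempty: "X \<in> carrier (G Mod H) \<Longrightarrow> X \<noteq> {}"
  using rcos_self[OF _ is_subgroup] by (auto simp: FactGroup_def RCOSETS_def)

lemma (in normal) FactGroup_inv_eq_image:
  "X \<in> carrier (G Mod H) \<Longrightarrow> inv\<^bsub>G Mod H\<^esub> X = (\<lambda>g. inv g) ` X"
  by (simp add: inv_FactGroup SET_INV_def image_def) blast

lemma (in normal) FactGroup_mult_inv_mult:
  assumes "X \<in> carrier (G Mod H)"
  shows "(X <#> inv\<^bsub>G Mod H\<^esub> X) <#> X = X"
proof -
  interpret F: group "G Mod H"
    by (rule factorgroup_is_group)
  show ?thesis
    using F.r_inv[OF assms] F.l_one[OF assms] by simp
qed

lemma (in normal) component_prod_subset_induced_coset: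
  assumes "C \<in> carrier (G Mod H)" and "g \<in> C"
  shows "set_prod (S g) (S (inv g)) \<subseteq> set_prod (induced S C) (induced S (inv\<^bsub>G Mod H\<^esub> C))"
proof -
  have "inv g \<in> inv\<^bsub>G Mod H\<^esub> C"
    using assms FactGroup_inv_eq_image by blast
  then show ?thesis
    using assms(2) by (intro set_prod_mono component_subset_induced)
qed

lemma (in normal) induced_coset_eps_strong:
  assumes grading: "is_grading G S"
    and eps: "\<And>g. g \<in> carrier G \<Longrightarrow> set_prod (set_prod (S g) (S (inv g))) (S g) = S g"
    and C: "C \<in> carrier (G Mod H)"
  shows "set_prod (set_prod (induced S C) (induced S (inv\<^bsub>G Mod H\<^esub> C))) (induced S C) = induced S C"
    (is "set_prod (set_prod ?SC ?SC') ?SC = ?SC")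
proof
  let ?C' = "inv\<^bsub>G Mod H\<^esub> C"
  have Cc: "C \<subseteq> carrier G" and C'c: "?C' \<subseteq> carrier G"
    using FactGroup_carrier_subset[OF C] FactGroup_inv_eq_image[OF C] by auto
  have "set_prod (set_prod ?SC ?SC') ?SC \<subseteq> set_prod (induced S (C <#> ?C')) ?SC"
    by (rule set_prod_mono[OF set_prod_induced[OF is_group grading Cc C'c] order.refl])
  also have "\<dots> \<subseteq> induced S ((C <#> ?C') <#> C)"
    by (rule set_prod_induced[OF is_group grading setmult_subset_G[OF Cc C'c] Cc])
  finally show "set_prod (set_prod ?SC ?SC') ?SC \<subseteq> ?SC"
    unfolding FactGroup_mult_inv_mult[OF C] .
  show "?SC \<subseteq> set_prod (set_prod ?SC ?SC') ?SC"
  proof (rule induced_least[OF zero_in_set_prod add_in_set_prod])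
    fix g assume "g \<in> C"
    have "set_prod (set_prod (S g) (S (inv g))) (S g) \<subseteq> set_prod (set_prod ?SC ?SC') ?SC"
      using component_prod_subset_induced_coset[OF C \<open>g \<in> C\<close>] component_subset_induced[OF \<open>g \<in> C\<close>]
      by (rule set_prod_mono)
    then show "S g \<subseteq> set_prod (set_prod ?SC ?SC') ?SC"
      using eps \<open>g \<in> C\<close> Cc by auto
  qed
qed

lemma (in normal) induced_coset_unital:
  assumes eps: "\<And>g. g \<in> carrier G \<Longrightarrow> set_prod (set_prod (S g) (S (inv g))) (S g) = S g"
    and C: "C \<in> carrier (G Mod H)"
    and comm: "\<forall>a\<in>X. \<forall>b\<in>X. a * b = b * a" and nonempty: "join_closure X \<noteq> {}"
    and unital: "\<And>g. g \<in> C \<Longrightarrow>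
      set_prod (S g) (S (inv g)) \<subseteq> left_unital (join_closure X) \<inter> right_unital (join_closure X)"
  shows "set_prod (induced S C) (induced S (inv\<^bsub>G Mod H\<^esub> C))
    \<subseteq> left_unital (join_closure X) \<inter> right_unital (join_closure X)"
proof -
  have Cc: "C \<subseteq> carrier G"
    using FactGroup_carrier_subset[OF C] .
  have "induced S C \<subseteq> left_unital (join_closure X)"
  proof (rule induced_least[OF zero_in_left_unital[OF nonempty] add_in_left_unital[OF comm]])
    fix g assume "g \<in> C"
    then have "set_prod (set_prod (S g) (S (inv g))) (S g) \<subseteq> left_unital (join_closure X)"
      using unital[OF \<open>g \<in> C\<close>] set_prod_subset_left_unital[OF comm nonempty] by blast
    then show "S g \<subseteq> left_unital (join_closure X)"
      using eps \<open>g \<in> C\<close> Cc by auto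
  qed
  moreover have "induced S (inv\<^bsub>G Mod H\<^esub> C) \<subseteq> right_unital (join_closure X)"
  proof (rule induced_least[OF zero_in_right_unital[OF nonempty] add_in_right_unital[OF comm]])
    fix h assume "h \<in> inv\<^bsub>G Mod H\<^esub> C"
    then obtain g where "g \<in> C" "h = inv g"
      using FactGroup_inv_eq_image[OF C] by blast
    then have "S h = set_prod (S h) (set_prod (S g) (S (inv g)))"
      using eps[of h] Cc by (auto simp: set_prod_assoc)
    moreover have "set_prod (S h) (set_prod (S g) (S (inv g))) \<subseteq> right_unital (join_closure X)"
      using unital[OF \<open>g \<in> C\<close>] set_prod_subset_right_unital[OF comm nonempty] by blast
    ultimately show "S h \<subseteq> right_unital (join_closure X)"
      by simp
  qed
  ultimately show ?thesis
    using set_prod_subset_left_unital[OF comm nonempty] set_prod_subset_right_unital[OF comm nonempty]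
    by blast
qed

lemma (in normal) idem_join_in_induced_coset_prod:
  assumes grading: "is_grading G S"
    and eps: "\<And>g. g \<in> carrier G \<Longrightarrow> set_prod (set_prod (S g) (S (inv g))) (S g) = S g"
    and C: "C \<in> carrier (G Mod H)"
    and "x \<in> set_prod (induced S C) (induced S (inv\<^bsub>G Mod H\<^esub> C))"
    and "y \<in> set_prod (induced S C) (induced S (inv\<^bsub>G Mod H\<^esub> C))"
  shows "idem_join x y \<in> set_prod (induced S C) (induced S (inv\<^bsub>G Mod H\<^esub> C))"
proof (rule idem_join_in_set_prod[OF induced_coset_eps_strong[of S, OF grading eps C] _ assms(4,5)])
  show "- a \<in> induced S C" if "a \<in> induced S C" for a
    using that is_grading_add_subgroup[OF grading] FactGroup_carrier_subset[OF C]
    by (intro uminus_in_induced) auto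
qed

lemma (in normal) local_units_induced_coset:
  assumes grading: "is_grading G S"
    and eps: "\<And>g. g \<in> carrier G \<Longrightarrow> set_prod (set_prod (S g) (S (inv g))) (S g) = S g"
    and C: "C \<in> carrier (G Mod H)"
    and units: "\<And>g. g \<in> C \<Longrightarrow> local_units (join_closure (M g)) (set_prod (S g) (S (inv g)))"
    and comm: "\<And>g h e f. g \<in> C \<Longrightarrow> h \<in> C \<Longrightarrow> e \<in> M g \<Longrightarrow> f \<in> M h \<Longrightarrow> e * f = f * e"
  shows "local_units (join_closure (\<Union>g\<in>C. M g)) (set_prod (induced S C) (induced S (inv\<^bsub>G Mod H\<^esub> C)))"
proof -
  define X where "X = (\<Union>g\<in>C. M g)"
  define R where "R = set_prod (induced S C) (induced S (inv\<^bsub>G Mod H\<^esub> C))"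
  have X_comm: "\<forall>a\<in>X. \<forall>b\<in>X. a * b = b * a"
    using comm unfolding X_def by blast
  have "a \<in> R \<and> idem a" if "g \<in> C" "a \<in> M g" for g a
  proof -
    have "a \<in> join_closure (M g)"
      using that(2) by (rule join_closure.base)
    then show ?thesis
      using units[OF that(1)] component_prod_subset_induced_coset[OF C that(1)]
      unfolding R_def local_units_def by blast
  qed
  then have "X \<subseteq> R" and X_idem: "\<forall>a\<in>X. idem a"
    unfolding X_def by blast+
  have unital: "set_prod (S g) (S (inv g)) \<subseteq> left_unital (join_closure X) \<inter> right_unital (join_closure X)"
    if "g \<in> C" for g
  proof -
    have "join_closure (M g) \<subseteq> join_closure X"
      unfolding X_def using that by (intro join_closure_mono) blast
    then show ?thesis
      by (rule local_units_unital[OF units[OF that]])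
  qed
  obtain g0 where "g0 \<in> C"
    using FactGroup_carrier_nonempty[OF C] by blast
  then have "0 \<in> left_unital (join_closure X)"
    using unital zero_in_set_prod by blast
  then have X_nonempty: "join_closure X \<noteq> {}"
    unfolding left_unital_def by blast
  have "local_units (join_closure X) R"
  proof (rule local_units_join_closure[OF X_comm X_idem \<open>X \<subseteq> R\<close>])
    show "idem_join a b \<in> R" if "a \<in> R" "b \<in> R" for a b
      using idem_join_in_induced_coset_prod[of S C a b, OF grading eps C] that unfolding R_def by blast
    show "R \<subseteq> left_unital (join_closure X) \<inter> right_unital (join_closure X)"
      unfolding R_def using induced_coset_unital[of S, OF eps C X_comm X_nonempty unital] .
  qed
  then show ?thesis
    unfolding X_def R_def .
qed

theorem proposition5p13:
  fixes G :: "('g, 'b) monoid_scheme" and N :: "'g set"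
    and S :: "'g \<Rightarrow> 'a::ring set" and M :: "'g \<Rightarrow> 'a set"
  assumes "group G" and "N \<lhd> G"
    and "is_grading G S" and "virtually_eps_strong G S"
    and "\<And>g. g \<in> carrier G \<Longrightarrow> comm_orth_idems (M g)
            \<and> local_units (join_closure (M g)) (set_prod (S g) (S (inv\<^bsub>G\<^esub> g)))"
    and a: "\<And>C g h e f. C \<in> carrier (G Mod N) \<Longrightarrow> g \<in> C \<Longrightarrow> h \<in> C
            \<Longrightarrow> e \<in> M g \<Longrightarrow> f \<in> M h \<Longrightarrow> e * f = f * e"
    and b: "\<And>C x y. C \<in> carrier (G Mod N) \<Longrightarrow>
            x \<in> join_closure (\<Union>g\<in>C. M g) \<Longrightarrow>
            (\<forall>z\<in>join_closure (\<Union>g\<in>C. M g). idem_le x z \<longrightarrow> z = x) \<Longrightarrow>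
            y \<in> join_closure (\<Union>g\<in>C. M g) \<Longrightarrow>
            (\<forall>z\<in>join_closure (\<Union>g\<in>C. M g). idem_le y z \<longrightarrow> z = y) \<Longrightarrow>
            x \<noteq> y \<Longrightarrow> idem x \<and> idem y \<and> x * y = 0 \<and> y * x = 0"
    and c: "\<And>C Ch. C \<in> carrier (G Mod N) \<Longrightarrow> Ch \<subseteq> join_closure (\<Union>g\<in>C. M g) \<Longrightarrow>
            (\<forall>x\<in>Ch. \<forall>y\<in>Ch. idem_le x y \<or> idem_le y x) \<Longrightarrow> finite Ch"
  shows "virtually_eps_strong (G Mod N) (induced S)"
proof -
  interpret normal N G
    by (rule assms(2))
  have grading: "is_grading G S"
    by fact
  have eps: "\<And>g. g \<in> carrier G \<Longrightarrow> set_prod (set_prod (S g) (S (inv\<^bsub>G\<^esub> g))) (S g) = S g"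
    using assms(4) unfolding virtually_eps_strong_def by blast
  show ?thesis
    unfolding virtually_eps_strong_def
  proof (intro ballI conjI)
    fix C assume C: "C \<in> carrier (G Mod N)"
    show "set_prod (set_prod (induced S C) (induced S (inv\<^bsub>G Mod N\<^esub> C))) (induced S C) = induced S C"
      by (rule induced_coset_eps_strong[of S, OF grading eps C])
    have "local_units (join_closure (\<Union>g\<in>C. M g))
        (set_prod (induced S C) (induced S (inv\<^bsub>G Mod N\<^esub> C)))"
      using assms(5) a[OF C] FactGroup_carrier_subset[OF C]
      by (intro local_units_induced_coset[of S, OF grading eps C]) blast+
    then show "enough_idempotents (set_prod (induced S C) (induced S (inv\<^bsub>G Mod N\<^esub> C)))"
      by (rule enough_idempotents_if_maximal_orthogonal)
        (use b[OF C] c[OF C] in \<open>auto simp: maximal_idems_def\<close>)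
  qed
qed

end
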